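(* Let $\delta,\alpha\geq0$, $\theta\in[0,\alpha]$, $\sigma\in\mathbb{R}$, $\varepsilon\in(0,1)$, and let $\widehat{v}(t,\xi)$ solve $(1+|\xi|^{2\delta})\widehat{v}_{tt}+|\xi|^{2\theta}\widehat{v}_t+|\xi|^{2\alpha}\widehat{v}=0$. Define, for $|\xi|\geq\varepsilon$, $$\rho(\xi)=\begin{cases}\dfrac{\varepsilon^{2\alpha+2\delta-4\theta}|\xi|^{2\theta}}{2(1+|\xi|^{2\delta})}&\text{if }\alpha+\delta\geq2\theta,\\[2mm] \dfrac{\varepsilon^{-2\alpha+4\theta}|\xi|^{2\alpha-2\theta}}{4}&\text{if }\alpha+\delta<2\theta,\end{cases}$$ $$E(t,\xi)=\tfrac12(1+|\xi|^{2\delta})|\xi|^\sigma|\widehat{v}_t|^2+\tfrac12|\xi|^{2\alpha+\sigma}|\widehat{v}|^2+\rho(\xi)(1+|\xi|^{2\delta})|\xi|^\sigma\,\mathrm{Re}\{\widehat{v}_t\overline{\widehat{v}}\}+\tfrac12\rho(\xi)|\xi|^{2\theta+\sigma}|\widehat{v}|^2,$$ $$E_1(t,\xi)=\tfrac12|\xi|^{2\delta+\sigma}|\widehat{v}_t|^2+\tfrac12|\xi|^{2\alpha+\sigma}|\widehat{v}|^2.$$ Then $E$ and $E_1$ are equivalent for all $t\geq0$ and $|\xi|\geq\varepsilon$: there are constants $m,M>0$ independent of $t,\xi$ with $mE_1(t,\xi)\leq E(t,\xi)\leq ME_1(t,\xi)$.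
   Context: $\widehat{v}$, $\widehat{v}_t$ are evaluated at $(t,\xi)$; the bar denotes complex conjugation. *)

theory Defs
  imports "HOL-Analysis.Analysis"
begin

definition rho :: "real \<Rightarrow> real \<Rightarrow> real \<Rightarrow> real \<Rightarrow> real \<Rightarrow> real" where
  "rho \<delta> \<alpha> \<theta> \<epsilon> r =
     (if \<alpha> + \<delta> \<ge> 2 * \<theta>
      then \<epsilon> powr (2*\<alpha> + 2*\<delta> - 4*\<theta>) * r powr (2*\<theta>) / (2 * (1 + r powr (2*\<delta>)))
      else \<epsilon> powr (- 2*\<alpha> + 4*\<theta>) * r powr (2*\<alpha> - 2*\<theta>) / 4)"

text \<open>Energy E at a point, given r = |xi|, vt = v_t(t,xi), w = v(t,xi).\<close>
definition energyE :: "real \<Rightarrow> real \<Rightarrow> real \<Rightarrow> real \<Rightarrow> real \<Rightarrow> real \<Rightarrow> complex \<Rightarrow> complex \<Rightarrow> real" where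
  "energyE \<delta> \<alpha> \<theta> \<sigma> \<epsilon> r vt w =
     1/2 * (1 + r powr (2*\<delta>)) * r powr \<sigma> * (cmod vt)^2
   + 1/2 * r powr (2*\<alpha> + \<sigma>) * (cmod w)^2
   + rho \<delta> \<alpha> \<theta> \<epsilon> r * (1 + r powr (2*\<delta>)) * r powr \<sigma> * Re (vt * cnj w)
   + 1/2 * rho \<delta> \<alpha> \<theta> \<epsilon> r * r powr (2*\<theta> + \<sigma>) * (cmod w)^2"

definition energyE1 :: "real \<Rightarrow> real \<Rightarrow> real \<Rightarrow> real \<Rightarrow> complex \<Rightarrow> complex \<Rightarrow> real" where
  "energyE1 \<delta> \<alpha> \<sigma> r vt w =
     1/2 * r powr (2*\<delta> + \<sigma>) * (cmod vt)^2 + 1/2 * r powr (2*\<alpha> + \<sigma>) * (cmod w)^2"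

end

theory Submission
  imports Defs
begin

text \<open>Writing \<open>a = |v\<^sub>t|\<close>, \<open>b = |v|\<close>, both energies
  are \<open>|\<xi>|\<^sup>\<sigma>\<close> times a quadratic form in \<open>(a, b)\<close>.  The cross term of \<open>E\<close> is absorbed by
  Young's inequality \<open>\<rho> D a b \<le> D a\<^sup>2/4 + \<rho>\<^sup>2 D b\<^sup>2\<close> with \<open>D = 1 + |\<xi>|\<^sup>2\<^sup>\<delta>\<close>, which works because
  the choice of \<rho> guarantees \<open>\<rho>\<^sup>2 D \<le> |\<xi>|\<^sup>2\<^sup>\<alpha>/4\<close> and \<open>\<rho> |\<xi>|\<^sup>2\<^sup>\<theta> \<le> |\<xi>|\<^sup>2\<^sup>\<alpha>/2\<close> for \<open>|\<xi>| \<ge> \<epsilon>\<close>.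
  Finally \<open>|\<xi>|\<^sup>2\<^sup>\<delta> \<le> D \<le> (1 + \<epsilon>\<^sup>-\<^sup>2\<^sup>\<delta>) |\<xi>|\<^sup>2\<^sup>\<delta>\<close> compares the kinetic parts of \<open>E\<close> and \<open>E\<^sub>1\<close>.\<close>

lemma quadratic_form_with_cross_term_bounds:
  fixes R D K A T \<rho> a b p :: real
  assumes "0 \<le> R" "R \<le> D" "D \<le> K * R" "1 \<le> K" "0 \<le> A" "0 \<le> T" "0 \<le> \<rho>"
    and "\<rho>\<^sup>2 * D \<le> A / 4" "\<rho> * T \<le> A / 2" "\<bar>p\<bar> \<le> a * b"
  shows "(R * a\<^sup>2 + A * b\<^sup>2) / 4 \<le> D * a\<^sup>2 / 2 + A * b\<^sup>2 / 2 + \<rho> * D * p + \<rho> * T * b\<^sup>2 / 2"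
    and "D * a\<^sup>2 / 2 + A * b\<^sup>2 / 2 + \<rho> * D * p + \<rho> * T * b\<^sup>2 / 2 \<le> K * (R * a\<^sup>2 + A * b\<^sup>2)"
proof -
  have D: "0 \<le> D" using assms by linarith
  have young: "\<rho> * D * (a * b) \<le> D * a\<^sup>2 / 4 + \<rho>\<^sup>2 * D * b\<^sup>2"
  proof -
    have "0 \<le> D * (a / 2 - \<rho> * b)\<^sup>2" using D by simp
    then show ?thesis by (simp add: power2_eq_square algebra_simps)
  qed
  have "\<rho>\<^sup>2 * D * b\<^sup>2 \<le> A * b\<^sup>2 / 4" using mult_right_mono[OF assms(8), of "b\<^sup>2"] by simp
  moreover have "\<bar>\<rho> * D * p\<bar> \<le> \<rho> * D * (a * b)"
    using assms D by (simp add: abs_mult mult_left_mono)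
  then have "- (\<rho> * D * (a * b)) \<le> \<rho> * D * p" "\<rho> * D * p \<le> \<rho> * D * (a * b)"
    by linarith+
  moreover have "\<rho> * T * b\<^sup>2 \<le> A * b\<^sup>2 / 2" using mult_right_mono[OF assms(9), of "b\<^sup>2"] by simp
  moreover have "R * a\<^sup>2 \<le> D * a\<^sup>2" "D * a\<^sup>2 \<le> K * (R * a\<^sup>2)"
    using mult_right_mono[OF assms(2), of "a\<^sup>2"] mult_right_mono[OF assms(3), of "a\<^sup>2"] by simp_all
  moreover have "A * b\<^sup>2 \<le> K * (A * b\<^sup>2)" using mult_right_mono[OF assms(4), of "A * b\<^sup>2"] assms by simp
  moreover have "0 \<le> \<rho> * T * b\<^sup>2" "0 \<le> R * a\<^sup>2" using assms by simp_all
  ultimately have "(R * a\<^sup>2 + A * b\<^sup>2) / 4 \<le> D * a\<^sup>2 / 2 + A * b\<^sup>2 / 2 + \<rho> * D * p + \<rho> * T * b\<^sup>2 / 2"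
    and "D * a\<^sup>2 / 2 + A * b\<^sup>2 / 2 + \<rho> * D * p + \<rho> * T * b\<^sup>2 / 2 \<le> K * (R * a\<^sup>2) + K * (A * b\<^sup>2)"
    using young by argo+
  then show "(R * a\<^sup>2 + A * b\<^sup>2) / 4 \<le> D * a\<^sup>2 / 2 + A * b\<^sup>2 / 2 + \<rho> * D * p + \<rho> * T * b\<^sup>2 / 2"
    and "D * a\<^sup>2 / 2 + A * b\<^sup>2 / 2 + \<rho> * D * p + \<rho> * T * b\<^sup>2 / 2 \<le> K * (R * a\<^sup>2 + A * b\<^sup>2)"
    by (simp_all add: distrib_left)
qed

lemma powr_mult_powr_le_one:
  fixes \<epsilon> r c e :: real
  assumes "0 < \<epsilon>" "\<epsilon> \<le> 1" "\<epsilon> \<le> r" "e \<le> 0" "0 \<le> c + e"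
  shows "\<epsilon> powr c * r powr e \<le> 1"
proof -
  have "\<epsilon> powr c * r powr e \<le> \<epsilon> powr c * \<epsilon> powr e"
    using powr_mono2'[of e \<epsilon> r] assms by (simp add: mult_left_mono)
  also have "\<dots> = \<epsilon> powr (c + e)" using assms by (simp add: powr_add)
  also have "\<dots> \<le> 1" using assms by (intro powr_le1) auto
  finally show ?thesis .
qed

lemma one_plus_powr_le:
  fixes \<epsilon> r c :: real
  assumes "0 < \<epsilon>" "\<epsilon> \<le> r" "0 \<le> c"
  shows "1 + r powr c \<le> (1 + \<epsilon> powr (- c)) * r powr c"
proof -
  have "1 = \<epsilon> powr (- c) * \<epsilon> powr c" using assms by (simp flip: powr_add)
  also have "\<dots> \<le> \<epsilon> powr (- c) * r powr c"
    using powr_mono2[of c \<epsilon> r] assms by (simp add: mult_left_mono)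
  finally show ?thesis by (simp add: algebra_simps)
qed

lemma rho_bounds_case_ge:
  fixes \<delta> \<alpha> \<theta> \<epsilon> r :: real
  assumes "2 * \<theta> \<le> \<alpha> + \<delta>" "0 < \<epsilon>" "\<epsilon> \<le> 1" "\<epsilon> \<le> r"
  shows "0 \<le> rho \<delta> \<alpha> \<theta> \<epsilon> r"
    and "(rho \<delta> \<alpha> \<theta> \<epsilon> r)\<^sup>2 * (1 + r powr (2*\<delta>)) \<le> r powr (2*\<alpha>) / 4"
    and "rho \<delta> \<alpha> \<theta> \<epsilon> r * r powr (2*\<theta>) \<le> r powr (2*\<alpha>) / 2"
proof -
  define e where "e = 2*\<alpha> + 2*\<delta> - 4*\<theta>"
  define x where "x = \<epsilon> powr e"
  define D where "D = 1 + r powr (2*\<delta>)"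
  have r: "0 < r" using assms by linarith
  have D: "0 < D" "r powr (2*\<delta>) \<le> D" by (simp_all add: D_def add_pos_nonneg)
  have A: "0 < r powr (2*\<alpha>)" using r by simp
  have e: "0 \<le> e" using assms(1) by (simp add: e_def)
  have x: "0 \<le> x" "x \<le> 1" using assms e by (auto simp: x_def intro: powr_le1)
  have "x * (r powr (2*\<theta>))\<^sup>2 \<le> r powr e * (r powr (2*\<theta>))\<^sup>2"
    unfolding x_def using powr_mono2[OF e] assms by (intro mult_right_mono) auto
  also have "\<dots> = r powr (2*\<delta>) * r powr (2*\<alpha>)"
    unfolding e_def using r by (simp add: power2_eq_square flip: powr_add) (simp add: algebra_simps)
  also have "\<dots> \<le> D * r powr (2*\<alpha>)" using D A by (intro mult_right_mono) auto
  finally have key: "x * (r powr (2*\<theta>))\<^sup>2 \<le> D * r powr (2*\<alpha>)" .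
  have rho: "rho \<delta> \<alpha> \<theta> \<epsilon> r = x * r powr (2*\<theta>) / (2 * D)"
    using assms(1) by (simp add: rho_def x_def e_def D_def)
  show "0 \<le> rho \<delta> \<alpha> \<theta> \<epsilon> r" using rho x D by simp
  have "rho \<delta> \<alpha> \<theta> \<epsilon> r * r powr (2*\<theta>) = x * (r powr (2*\<theta>))\<^sup>2 / (2 * D)"
    by (simp add: rho power2_eq_square)
  also have "\<dots> \<le> r powr (2*\<alpha>) / 2" using key D by (simp add: field_simps)
  finally show "rho \<delta> \<alpha> \<theta> \<epsilon> r * r powr (2*\<theta>) \<le> r powr (2*\<alpha>) / 2" .
  have "(rho \<delta> \<alpha> \<theta> \<epsilon> r)\<^sup>2 * D = x * (x * (r powr (2*\<theta>))\<^sup>2) / (4 * D)"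
    using D by (simp add: rho power2_eq_square field_simps)
  also have "\<dots> \<le> x * (D * r powr (2*\<alpha>)) / (4 * D)"
    using key x D by (intro divide_right_mono mult_left_mono) auto
  also have "\<dots> \<le> r powr (2*\<alpha>) / 4" using x D A by (simp add: field_simps)
  finally show "(rho \<delta> \<alpha> \<theta> \<epsilon> r)\<^sup>2 * (1 + r powr (2*\<delta>)) \<le> r powr (2*\<alpha>) / 4"
    by (simp add: D_def)
qed

lemma rho_bounds_case_lt:
  fixes \<delta> \<alpha> \<theta> \<epsilon> r :: real
  assumes "\<alpha> + \<delta> < 2 * \<theta>" "0 \<le> \<delta>" "0 < \<epsilon>" "\<epsilon> \<le> 1" "\<epsilon> \<le> r"
  shows "0 \<le> rho \<delta> \<alpha> \<theta> \<epsilon> r"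
    and "(rho \<delta> \<alpha> \<theta> \<epsilon> r)\<^sup>2 * (1 + r powr (2*\<delta>)) \<le> r powr (2*\<alpha>) / 4"
    and "rho \<delta> \<alpha> \<theta> \<epsilon> r * r powr (2*\<theta>) \<le> r powr (2*\<alpha>) / 2"
proof -
  define y where "y = \<epsilon> powr (4*\<theta> - 2*\<alpha>)"
  define A where "A = r powr (2*\<alpha>)"
  have r: "0 < r" using assms by linarith
  have A: "0 < A" using r by (simp add: A_def)
  have y: "0 \<le> y" "y \<le> 1" using assms by (auto simp: y_def intro: powr_le1)
  have rho: "rho \<delta> \<alpha> \<theta> \<epsilon> r = y * r powr (2*\<alpha> - 2*\<theta>) / 4"
    using assms(1) by (simp add: rho_def y_def)
  show "0 \<le> rho \<delta> \<alpha> \<theta> \<epsilon> r" unfolding rho using y by simp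
  have "rho \<delta> \<alpha> \<theta> \<epsilon> r * r powr (2*\<theta>) = y * A / 4"
    using r by (simp add: rho A_def flip: powr_add)
  also have "\<dots> \<le> A / 2" using y A by (simp add: field_simps)
  finally show "rho \<delta> \<alpha> \<theta> \<epsilon> r * r powr (2*\<theta>) \<le> r powr (2*\<alpha>) / 2"
    by (simp add: A_def)
  define P where "P = r powr (2*\<alpha> - 2*\<theta>)"
  have y2: "y\<^sup>2 = \<epsilon> powr (8*\<theta> - 4*\<alpha>)"
    by (simp add: y_def power2_eq_square flip: powr_add)
  have P2: "P\<^sup>2 = A * r powr (2*\<alpha> - 4*\<theta>)"
    unfolding P_def A_def using r by (simp add: power2_eq_square flip: powr_add)
  have P2R: "P\<^sup>2 * r powr (2*\<delta>) = A * r powr (2*\<alpha> - 4*\<theta> + 2*\<delta>)"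
    unfolding P2 A_def using r by (simp add: mult.assoc flip: powr_add) (simp add: algebra_simps)
  have "(rho \<delta> \<alpha> \<theta> \<epsilon> r)\<^sup>2 * (1 + r powr (2*\<delta>)) = (y\<^sup>2 * P\<^sup>2 + y\<^sup>2 * (P\<^sup>2 * r powr (2*\<delta>))) / 16"
    by (simp add: rho P_def power2_eq_square field_simps)
  also have "\<dots> = A * (\<epsilon> powr (8*\<theta> - 4*\<alpha>) * r powr (2*\<alpha> - 4*\<theta>)
           + \<epsilon> powr (8*\<theta> - 4*\<alpha>) * r powr (2*\<alpha> - 4*\<theta> + 2*\<delta>)) / 16"
    unfolding P2R unfolding y2 P2 by (simp add: algebra_simps)
  also have "\<dots> \<le> A * (1 + 1) / 16"
    using assms A by (intro divide_right_mono mult_left_mono add_mono powr_mult_powr_le_one) auto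
  also have "\<dots> \<le> A / 4" using A by simp
  finally show "(rho \<delta> \<alpha> \<theta> \<epsilon> r)\<^sup>2 * (1 + r powr (2*\<delta>)) \<le> r powr (2*\<alpha>) / 4"
    by (simp add: A_def)
qed

lemma rho_bounds:
  fixes \<delta> \<alpha> \<theta> \<epsilon> r :: real
  assumes "0 \<le> \<delta>" "0 < \<epsilon>" "\<epsilon> \<le> 1" "\<epsilon> \<le> r"
  shows "0 \<le> rho \<delta> \<alpha> \<theta> \<epsilon> r"
    and "(rho \<delta> \<alpha> \<theta> \<epsilon> r)\<^sup>2 * (1 + r powr (2*\<delta>)) \<le> r powr (2*\<alpha>) / 4"
    and "rho \<delta> \<alpha> \<theta> \<epsilon> r * r powr (2*\<theta>) \<le> r powr (2*\<alpha>) / 2"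
  using rho_bounds_case_ge[of \<theta> \<alpha> \<delta> \<epsilon> r] rho_bounds_case_lt[of \<alpha> \<delta> \<theta> \<epsilon> r] assms
  by (cases "2 * \<theta> \<le> \<alpha> + \<delta>"; simp)+

lemma energy_equivalence_pointwise:
  fixes \<delta> \<alpha> \<theta> \<sigma> \<epsilon> r :: real and vt w :: complex
  assumes "0 \<le> \<delta>" "0 < \<epsilon>" "\<epsilon> \<le> 1" "\<epsilon> \<le> r"
  shows "energyE1 \<delta> \<alpha> \<sigma> r vt w / 2 \<le> energyE \<delta> \<alpha> \<theta> \<sigma> \<epsilon> r vt w"
    and "energyE \<delta> \<alpha> \<theta> \<sigma> \<epsilon> r vt w \<le> 2 * (1 + \<epsilon> powr (-2*\<delta>)) * energyE1 \<delta> \<alpha> \<sigma> r vt w"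
proof -
  define R A T \<rho> where "R = r powr (2*\<delta>)" and "A = r powr (2*\<alpha>)" and "T = r powr (2*\<theta>)"
    and "\<rho> = rho \<delta> \<alpha> \<theta> \<epsilon> r"
  define K a b p where "K = 1 + \<epsilon> powr (-2*\<delta>)" and "a = cmod vt" and "b = cmod w"
    and "p = Re (vt * cnj w)"
  have r: "0 < r" using assms by linarith
  have "\<bar>p\<bar> \<le> a * b"
    using abs_Re_le_cmod[of "vt * cnj w"] by (simp add: p_def a_def b_def norm_mult)
  then have Q: "(R * a\<^sup>2 + A * b\<^sup>2) / 4 \<le> (1 + R) * a\<^sup>2 / 2 + A * b\<^sup>2 / 2 + \<rho> * (1 + R) * p + \<rho> * T * b\<^sup>2 / 2"
    "(1 + R) * a\<^sup>2 / 2 + A * b\<^sup>2 / 2 + \<rho> * (1 + R) * p + \<rho> * T * b\<^sup>2 / 2 \<le> K * (R * a\<^sup>2 + A * b\<^sup>2)"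
    using quadratic_form_with_cross_term_bounds[of R "1 + R" K A T \<rho> p a b]
      rho_bounds[OF assms, of \<alpha> \<theta>] one_plus_powr_le[of \<epsilon> r "2*\<delta>"] assms
    by (simp_all add: R_def A_def T_def \<rho>_def K_def)
  have E1: "energyE1 \<delta> \<alpha> \<sigma> r vt w = r powr \<sigma> * ((R * a\<^sup>2 + A * b\<^sup>2) / 2)"
    using r by (simp add: energyE1_def R_def A_def a_def b_def powr_add algebra_simps)
  have E: "energyE \<delta> \<alpha> \<theta> \<sigma> \<epsilon> r vt w
      = r powr \<sigma> * ((1 + R) * a\<^sup>2 / 2 + A * b\<^sup>2 / 2 + \<rho> * (1 + R) * p + \<rho> * T * b\<^sup>2 / 2)"
    using r by (simp add: energyE_def R_def A_def T_def \<rho>_def a_def b_def p_def powr_add algebra_simps)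
  have "0 < r powr \<sigma>" using r by simp
  then show "energyE1 \<delta> \<alpha> \<sigma> r vt w / 2 \<le> energyE \<delta> \<alpha> \<theta> \<sigma> \<epsilon> r vt w"
    and "energyE \<delta> \<alpha> \<theta> \<sigma> \<epsilon> r vt w \<le> 2 * (1 + \<epsilon> powr (-2*\<delta>)) * energyE1 \<delta> \<alpha> \<sigma> r vt w"
    unfolding E E1 K_def[symmetric] using Q by (simp_all add: mult_left_mono)
qed

theorem lemma3p2:
  fixes \<delta> \<alpha> \<theta> \<sigma> \<epsilon> :: real
  assumes "\<delta> \<ge> 0" and "\<alpha> \<ge> 0" and "0 \<le> \<theta>" and "\<theta> \<le> \<alpha>"
    and "0 < \<epsilon>" and "\<epsilon> < 1"
  shows "\<exists>m M. m > 0 \<and> M > 0 \<and>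
    (\<forall>(v :: real \<Rightarrow> 'a::euclidean_space \<Rightarrow> complex) vt vtt.
       ((\<forall>\<xi> t. t \<ge> 0 \<longrightarrow>
            ((\<lambda>s. v s \<xi>) has_vector_derivative vt t \<xi>) (at t within {0..}) \<and>
            ((\<lambda>s. vt s \<xi>) has_vector_derivative vtt t \<xi>) (at t within {0..}) \<and>
            complex_of_real (1 + norm \<xi> powr (2*\<delta>)) * vtt t \<xi>
              + complex_of_real (norm \<xi> powr (2*\<theta>)) * vt t \<xi>
              + complex_of_real (norm \<xi> powr (2*\<alpha>)) * v t \<xi> = 0))
       \<longrightarrow> (\<forall>t \<ge> 0. \<forall>\<xi>. norm \<xi> \<ge> \<epsilon> \<longrightarrow>
             m * energyE1 \<delta> \<alpha> \<sigma> (norm \<xi>) (vt t \<xi>) (v t \<xi>)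
               \<le> energyE \<delta> \<alpha> \<theta> \<sigma> \<epsilon> (norm \<xi>) (vt t \<xi>) (v t \<xi>) \<and>
             energyE \<delta> \<alpha> \<theta> \<sigma> \<epsilon> (norm \<xi>) (vt t \<xi>) (v t \<xi>)
               \<le> M * energyE1 \<delta> \<alpha> \<sigma> (norm \<xi>) (vt t \<xi>) (v t \<xi>)))"
proof -
  define K where "K = 1 + \<epsilon> powr (-2*\<delta>)"
  have "0 < K" by (simp add: K_def add_pos_nonneg)
  moreover have "1/2 * energyE1 \<delta> \<alpha> \<sigma> r vt w \<le> energyE \<delta> \<alpha> \<theta> \<sigma> \<epsilon> r vt w"
    and "energyE \<delta> \<alpha> \<theta> \<sigma> \<epsilon> r vt w \<le> 2 * K * energyE1 \<delta> \<alpha> \<sigma> r vt w"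
    if "\<epsilon> \<le> r" for r and vt w :: complex
    using energy_equivalence_pointwise[OF \<open>0 \<le> \<delta>\<close> \<open>0 < \<epsilon>\<close> _ that] \<open>\<epsilon> < 1\<close>
    by (simp_all add: K_def)
  ultimately show ?thesis
    by (intro exI[of _ "1/2"] exI[of _ "2 * K"]) auto
qed

end
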